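(* Let $G=(V,E,p)$ be an influence graph that is an in-arborescence. Then for every partial realization $\psi$ under full-adoption feedback, $|\partial(\psi)|\le|{\rm dom}(\psi)|$.
   Context: An in-arborescence is an influence graph whose underlying graph is a directed tree with a root $r$ such that for every node $v$ the unique path between $v$ and $r$ is directed from $v$ to $r$. IC model: each edge has a probability $p_{uv}$; a realization $\phi$ contains each edge independently with probability $p_{uv}$. Full-adoption feedback: selecting $u$ as a seed reveals the live/blocked status of all out-going edges of every node reachable from $u$ in $\phi$. A partial realization $\psi$ records the seeds selected so far (the set ${\rm dom}(\psi)$) with their feedback; $\Gamma(\psi)$ is the set of nodes reachable from ${\rm dom}(\psi)$ through live edges (determined by $\psi$). The boundary $\partial(\psi)$ is a subset of $\Gamma(\psi)$ of minimum cardinality such that $G$ has no directed edge from $\Gamma(\psi)\setminus\partial(\psi)$ to $V\setminus\Gamma(\psi)$ (ties broken arbitrarily). *)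

theory Defs
  imports Complex_Main
begin

definition influence_graph :: "'a set \<Rightarrow> ('a \<times> 'a) set \<Rightarrow> ('a \<times> 'a \<Rightarrow> real) \<Rightarrow> bool" where
  "influence_graph V E p \<longleftrightarrow> finite V \<and> E \<subseteq> V \<times> V \<and> (\<forall>e\<in>E. 0 \<le> p e \<and> p e \<le> 1)"

(* Underlying undirected graph is a tree: no loops, no antiparallel (duplicate undirected)
   edges, connected (implied by reachability of the root) and |E| = |V| - 1;
   every node v has a directed path v \<leadsto> r (this is then the unique tree path). *)
definition in_arborescence :: "'a set \<Rightarrow> ('a \<times> 'a) set \<Rightarrow> 'a \<Rightarrow> bool" where
  "in_arborescence V E r \<longleftrightarrow>
     finite V \<and> E \<subseteq> V \<times> V \<and> r \<in> V \<and>
     (\<forall>(u,v)\<in>E. u \<noteq> v \<and> (v,u) \<notin> E) \<and>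
     card E + 1 = card V \<and>
     (\<forall>v\<in>V. (v, r) \<in> E\<^sup>*)"

(* A realization (set of live edges) that has positive probability under the IC model. *)
definition realization :: "('a \<times> 'a) set \<Rightarrow> ('a \<times> 'a \<Rightarrow> real) \<Rightarrow> ('a \<times> 'a) set \<Rightarrow> bool" where
  "realization E p \<phi> \<longleftrightarrow> \<phi> \<subseteq> E \<and> (\<forall>e\<in>\<phi>. p e > 0) \<and> (\<forall>e\<in>E - \<phi>. p e < 1)"

(* \<Gamma>(\<psi>): nodes reachable from the seeds dom(\<psi>) through live edges of \<phi>.
   Under full-adoption feedback, this set is determined by \<psi>. *)
definition reached :: "('a \<times> 'a) set \<Rightarrow> 'a set \<Rightarrow> 'a set" where
  "reached \<phi> S = {v. \<exists>s\<in>S. (s, v) \<in> \<phi>\<^sup>*}"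

definition boundary_candidate :: "'a set \<Rightarrow> ('a \<times> 'a) set \<Rightarrow> 'a set \<Rightarrow> 'a set \<Rightarrow> bool" where
  "boundary_candidate V E \<Gamma> B \<longleftrightarrow> B \<subseteq> \<Gamma> \<and> (\<forall>(u,w)\<in>E. u \<in> \<Gamma> - B \<longrightarrow> w \<notin> V - \<Gamma>)"

definition is_boundary :: "'a set \<Rightarrow> ('a \<times> 'a) set \<Rightarrow> 'a set \<Rightarrow> 'a set \<Rightarrow> bool" where
  "is_boundary V E \<Gamma> B \<longleftrightarrow> boundary_candidate V E \<Gamma> B \<and>
     (\<forall>B'. boundary_candidate V E \<Gamma> B' \<longrightarrow> card B \<le> card B')"

end

theory Submission
  imports Defs
begin

(* Every node other than the root has an out-edge, and an in-arborescence has only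
   |V| - 1 edges, so no node can have two: the edge relation is single-valued.
   Hence live-edge paths are deterministic.  The nodes of \<Gamma>(\<psi>) without a live out-edge
   form a boundary candidate, because every other node of \<Gamma>(\<psi>) has its unique out-edge
   live and so points back into \<Gamma>(\<psi>); and following live edges from a seed ends in at
   most one such node, so there are at most |dom(\<psi>)| of them. *)

lemma card_Domain_less_card_if_not_single_valued:
  assumes "finite R" and "\<not> single_valued R"
  shows "card (Domain R) < card R"
proof -
  have "\<not> inj_on fst R"
    using assms(2) unfolding single_valued_def inj_on_def by (metis fst_conv prod.inject)
  then have "card (fst ` R) \<noteq> card R"
    using assms(1) inj_on_iff_eq_card by blast
  then show ?thesis
    using card_image_le[OF assms(1), of fst] by (simp add: Domain_fst)
qed

lemma in_arborescence_Domain: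
  assumes "in_arborescence V E r"
  shows "V - {r} \<subseteq> Domain E"
proof
  fix v assume "v \<in> V - {r}"
  then have "(v, r) \<in> E\<^sup>*" and "v \<noteq> r"
    using assms by (auto simp: in_arborescence_def)
  then show "v \<in> Domain E"
    by (metis DomainI converse_rtranclE)
qed

lemma in_arborescence_single_valued:
  assumes "in_arborescence V E r"
  shows "single_valued E"
proof (rule ccontr)
  assume "\<not> single_valued E"
  from assms have "finite V" "r \<in> V" "E \<subseteq> V \<times> V" "card E + 1 = card V"
    by (auto simp: in_arborescence_def)
  then have "finite E"
    by (meson finite_SigmaI finite_subset)
  then have "finite (Domain E)"
    by (simp add: Domain_fst)
  have "card V - 1 = card (V - {r})"
    using \<open>r \<in> V\<close> by simp
  also have "\<dots> \<le> card (Domain E)"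
    using card_mono[OF \<open>finite (Domain E)\<close> in_arborescence_Domain[OF assms]] .
  also have "\<dots> < card E"
    using card_Domain_less_card_if_not_single_valued[OF \<open>finite E\<close> \<open>\<not> single_valued E\<close>] .
  finally show False
    using \<open>card E + 1 = card V\<close> by linarith
qed

lemma single_valued_rtrancl_sink_unique:
  assumes "single_valued R" and "(s, a) \<in> R\<^sup>*" and "(s, b) \<in> R\<^sup>*"
    and "a \<notin> Domain R" and "b \<notin> Domain R"
  shows "a = b"
  using single_valued_confluent[OF assms(1-3)] assms(4,5)
  by (metis DomainI converse_rtranclE)

lemma reached_step:
  assumes "u \<in> reached \<phi> S" and "(u, x) \<in> \<phi>"
  shows "x \<in> reached \<phi> S"
  using assms by (auto simp: reached_def intro: rtrancl_into_rtrancl)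

lemma boundary_candidate_reached_sinks:
  assumes "single_valued E" and "\<phi> \<subseteq> E"
  shows "boundary_candidate V E (reached \<phi> S) (reached \<phi> S - Domain \<phi>)"
proof -
  have "w \<in> reached \<phi> S"
    if "(u, w) \<in> E" and "u \<in> reached \<phi> S" and "u \<in> Domain \<phi>" for u w
  proof -
    from \<open>u \<in> Domain \<phi>\<close> obtain x where "(u, x) \<in> \<phi>" ..
    moreover have "x = w"
      using single_valuedD[OF assms(1)] \<open>(u, x) \<in> \<phi>\<close> \<open>(u, w) \<in> E\<close> assms(2) by auto
    ultimately show ?thesis
      using reached_step[OF \<open>u \<in> reached \<phi> S\<close>] by simp
  qed
  then show ?thesis
    by (auto simp: boundary_candidate_def)
qed

lemma card_reached_sinks_le:
  assumes "single_valued \<phi>" and "finite S"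
  shows "card (reached \<phi> S - Domain \<phi>) \<le> card S"
proof -
  let ?T = "reached \<phi> S - Domain \<phi>"
  have "\<forall>t\<in>?T. \<exists>s\<in>S. (s, t) \<in> \<phi>\<^sup>*"
    by (simp add: reached_def)
  then obtain seed where seed: "\<And>t. t \<in> ?T \<Longrightarrow> seed t \<in> S \<and> (seed t, t) \<in> \<phi>\<^sup>*"
    by (metis bchoice)
  have "inj_on seed ?T"
  proof (rule inj_onI)
    fix a b assume "a \<in> ?T" "b \<in> ?T" "seed a = seed b"
    then show "a = b"
      using seed single_valued_rtrancl_sink_unique[OF assms(1)] by (metis DiffD2)
  qed
  moreover have "seed ` ?T \<subseteq> S"
    using seed by blast
  ultimately show ?thesis
    using card_inj_on_le assms(2) by blast
qed

theorem lemma3: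
  fixes V :: "'a set" and E :: "('a \<times> 'a) set" and p :: "'a \<times> 'a \<Rightarrow> real"
    and r :: 'a and \<phi> :: "('a \<times> 'a) set" and S :: "'a set" and B :: "'a set"
  assumes "influence_graph V E p"
    and "in_arborescence V E r"
    and "realization E p \<phi>"
    and "S \<subseteq> V"
    and "is_boundary V E (reached \<phi> S) B"
  shows "card B \<le> card S"
proof -
  have "\<phi> \<subseteq> E"
    using assms(3) by (simp add: realization_def)
  have "single_valued E"
    using in_arborescence_single_valued[OF assms(2)] .
  then have "single_valued \<phi>"
    using single_valued_subset \<open>\<phi> \<subseteq> E\<close> by blast
  have "finite S"
    using assms(2,4) finite_subset by (auto simp: in_arborescence_def)
  have "card B \<le> card (reached \<phi> S - Domain \<phi>)"
    using assms(5) boundary_candidate_reached_sinks[OF \<open>single_valued E\<close> \<open>\<phi> \<subseteq> E\<close>]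
    by (auto simp: is_boundary_def)
  also have "\<dots> \<le> card S"
    using card_reached_sinks_le[OF \<open>single_valued \<phi>\<close> \<open>finite S\<close>] .
  finally show ?thesis .
qed

end
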